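(* Let $B,V$ be non-empty disjoint compact subsets of $\mathbf S^3$. There is a constant $C>0$ such that for any $x,x'\in B$, any $u,u'\in\mathcal L_{\mathbb C}$ such that the chain $L_u$ passes through $x$, the chain $L_{u'}$ passes through $x'$, and both meet $V$, and any $r>0$, \[\pi_x^{-1}(B(u,r))\cap V\subset\pi_{x'}^{-1}\big(B(u',C(r+d_E(u,u')))\big),\] where $B(u,r)$ denotes the closed $d_E$-ball in $\mathbb P^2_{\mathbb C}$.
   Context: On $\mathbb{C}^3$: $u\cdot v=\sum u_i\bar v_i$, $\|u\|=\sqrt{u\cdot u}$, $\langle u,v\rangle=u_0\bar v_0-u_1\bar v_1-u_2\bar v_2$, $q(u)=\langle u,u\rangle$, $\|u\wedge v\|^2=\|u\|^2\|v\|^2-|u\cdot v|^2$. On $\mathbb P^2_{\mathbb C}$, $d_E(u,v)=\|u\wedge v\|/(\|u\|\|v\|)$. $\mathbf S^3=\{u:q(u)=0\}$. $\mathcal L_{\mathbb C}=\{w:q(w)<0\}$, $w^\perp=\{u:\langle u,w\rangle=0\}$, $L_w=w^\perp\cap\mathbf S^3$ (a chain). For $x\in\mathbf S^3$ and $y\in\mathbf S^3\setminus\{x\}$, $\pi_x(y)$ is the unique intersection point of $x^\perp$ and $y^\perp$; $\pi_x^{-1}(A)=\{y\in\mathbf S^3\setminus\{x\}:\pi_x(y)\in A\}$. *)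

theory Defs
  imports "HOL-Analysis.Analysis"
begin

text \<open>Points of P^2_C are represented by nonzero vectors; subsets of P^2_C by
 cones: sets of nonzero vectors closed under multiplication by nonzero scalars.\<close>

definition cdot :: "complex^3 \<Rightarrow> complex^3 \<Rightarrow> complex" where
  "cdot u v = (\<Sum>i\<in>UNIV. u$i * cnj (v$i))"

definition herm :: "complex^3 \<Rightarrow> complex^3 \<Rightarrow> complex" where
  "herm u v = u$0 * cnj (v$0) - u$1 * cnj (v$1) - u$2 * cnj (v$2)"

definition qf :: "complex^3 \<Rightarrow> real" where
  "qf u = Re (herm u u)"

definition wedge_norm :: "complex^3 \<Rightarrow> complex^3 \<Rightarrow> real" where
  "wedge_norm u v = sqrt ((norm u)^2 * (norm v)^2 - (cmod (cdot u v))^2)"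

definition dE :: "complex^3 \<Rightarrow> complex^3 \<Rightarrow> real" where
  "dE u v = wedge_norm u v / (norm u * norm v)"

definition proj_eq :: "complex^3 \<Rightarrow> complex^3 \<Rightarrow> bool" where
  "proj_eq u v \<longleftrightarrow> u \<noteq> 0 \<and> v \<noteq> 0 \<and> (\<exists>c. c \<noteq> 0 \<and> v = c *s u)"

definition proj_set :: "(complex^3) set \<Rightarrow> bool" where
  "proj_set A \<longleftrightarrow> (\<forall>a\<in>A. a \<noteq> 0) \<and> (\<forall>a\<in>A. \<forall>c. c \<noteq> 0 \<longrightarrow> c *s a \<in> A)"

text \<open>Compactness in P^2_C (quotient topology of the unit sphere of C^3).\<close>
definition proj_compact :: "(complex^3) set \<Rightarrow> bool" where
  "proj_compact A \<longleftrightarrow> compact {a\<in>A. norm a = 1}"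

definition S3 :: "(complex^3) set" where
  "S3 = {u. u \<noteq> 0 \<and> qf u = 0}"

definition LC :: "(complex^3) set" where
  "LC = {w. qf w < 0}"

definition chain :: "complex^3 \<Rightarrow> (complex^3) set" where
  "chain w = {u\<in>S3. herm u w = 0}"

text \<open>pi_x(y): a representative of the unique intersection point of x^perp and y^perp.\<close>
definition proj_pi :: "complex^3 \<Rightarrow> complex^3 \<Rightarrow> complex^3" where
  "proj_pi x y = (SOME p. p \<noteq> 0 \<and> herm p x = 0 \<and> herm p y = 0)"

definition pi_inv :: "complex^3 \<Rightarrow> (complex^3) set \<Rightarrow> (complex^3) set" where
  "pi_inv x A = {y\<in>S3. \<not> proj_eq x y \<and> proj_pi x y \<in> A}"

definition dball :: "complex^3 \<Rightarrow> real \<Rightarrow> (complex^3) set" where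
  "dball u r = {p. p \<noteq> 0 \<and> dE u p \<le> r}"

end

theory Submission
  imports Defs
begin

(* Two herm-orthogonal null vectors are proportional, so by compactness and disjointness
   |<x,y>| >= delta |x| |y| on B x V for some delta > 0.
   Since pi_x(y) is orthogonal to y and |<y,u>| / |u| is |y|-Lipschitz in u for d_E,
   |<y,u'>| / |u'| <= |y| (r + d_E(u,u')).  On the other side, pi_x'(y) is the point
   u' - (<u',y> / <x',y>) x', whose d_E-distance to u' is at most
   |<u',y>| |x'| / (|<x',y>| sqrt(-q(u'))); and sqrt(-q(u')) >= delta |u'| because u' is
   orthogonal to x' and to a point of V.  Hence C = 1 / delta^2 works. *)

lemma UNIV_3_eq: "(UNIV::3 set) = {0, 1, 2}"
  using UNIV_3 by auto

lemma sum_UNIV_3: "sum f (UNIV::3 set) = f 0 + f 1 + f 2"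
  unfolding UNIV_3_eq by (simp add: ac_simps)

lemma vec3_eq_iff: "(x::'a^3) = y \<longleftrightarrow> x$0 = y$0 \<and> x$1 = y$1 \<and> x$2 = y$2"
  unfolding vec_eq_iff using UNIV_3_eq by (metis UNIV_I insertE singletonD)

lemma power2_norm_vec3:
  "(norm (x::complex^3))^2 = (cmod (x$0))^2 + (cmod (x$1))^2 + (cmod (x$2))^2"
  unfolding norm_vec_def L2_set_def by (simp add: sum_UNIV_3)

lemma norm_smult_vec3: "norm (k *s (x::complex^3)) = cmod k * norm x"
proof -
  have "(norm (k *s x))^2 = (cmod k)^2 * (norm x)^2"
    unfolding power2_norm_vec3 by (simp add: norm_mult power_mult_distrib algebra_simps)
  then show ?thesis
    by (simp add: power2_eq_iff_nonneg power_mult_distrib[symmetric])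
qed

lemma qf_eq_coords: "qf x = (cmod (x$0))^2 - (cmod (x$1))^2 - (cmod (x$2))^2"
  unfolding cmod_power2 qf_def herm_def by (simp add: power2_eq_square)

lemma neg_qf_le_norm: "- qf x \<le> (norm x)^2"
  unfolding qf_eq_coords power2_norm_vec3 by simp

lemma herm_self: "herm x x = of_real (qf x)"
  unfolding qf_def herm_def by (simp add: complex_eq_iff)

lemma cdot_self: "cdot x x = of_real ((norm x)^2)"
  unfolding cdot_def power2_norm_vec3 sum_UNIV_3 of_real_add complex_norm_square by simp

lemma herm_diff_left: "herm (a - b) c = herm a c - herm b c"
  and herm_diff_right: "herm c (a - b) = herm c a - herm c b"
  and herm_smult_left: "herm (k *s a) b = k * herm a b"
  and herm_smult_right: "herm a (k *s b) = cnj k * herm a b"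
  and herm_commute: "herm b a = cnj (herm a b)"
  unfolding herm_def by (simp_all add: algebra_simps)

lemma cdot_add_left: "cdot (a + b) c = cdot a c + cdot b c"
  and cdot_diff_left: "cdot (a - b) c = cdot a c - cdot b c"
  and cdot_diff_right: "cdot c (a - b) = cdot c a - cdot c b"
  and cdot_smult_left: "cdot (k *s a) b = k * cdot a b"
  and cdot_smult_right: "cdot a (k *s b) = cnj k * cdot a b"
  and cdot_commute: "cdot b a = cnj (cdot a b)"
  unfolding cdot_def sum_UNIV_3 by (simp_all add: algebra_simps)

lemma qf_smult: "qf (k *s x) = (cmod k)^2 * qf x"
proof -
  have "of_real (qf (k *s x)) = (of_real ((cmod k)^2 * qf x) :: complex)"
    by (simp add: herm_self[symmetric] herm_smult_left herm_smult_right complex_norm_square mult_ac del: of_real_power)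
  then show ?thesis
    by (simp only: of_real_eq_iff)
qed

lemma LC_nonzero: "u \<in> LC \<Longrightarrow> u \<noteq> 0"
  unfolding LC_def qf_def herm_def by auto

lemma norm_residual_sq:
  assumes "a \<noteq> 0"
  shows "(norm (b - (cdot b a / of_real ((norm a)^2)) *s a))^2
           = (norm b)^2 - (cmod (cdot b a))^2 / (norm a)^2"
proof -
  define N where "N = (norm a)^2"
  define d where "d = cdot b a"
  define t where "t = d / of_real N"
  have N: "of_real N \<noteq> (0::complex)"
    using assms unfolding N_def by simp
  have "of_real ((norm (b - t *s a))^2) = cdot (b - t *s a) (b - t *s a)"
    by (simp only: cdot_self)
  also have "\<dots> = cdot b b - cnj t * d - t * cdot a b + t * cnj t * cdot a a"
    unfolding d_def cdot_diff_left cdot_diff_right cdot_smult_left cdot_smult_right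
    by (simp add: algebra_simps)
  also have "\<dots> = of_real ((norm b)^2) - of_real ((cmod d)^2 / N)"
  proof -
    have h1: "cnj t * d = d * cnj d / of_real N" and h2: "t * cdot a b = d * cnj d / of_real N"
      using cdot_commute[of a b] by (simp_all add: t_def d_def)
    have h3: "t * cnj t * cdot a a = d * cnj d / of_real N"
      unfolding t_def cdot_self N_def[symmetric] using N by (simp add: power2_eq_square)
    have e: "of_real ((cmod d)^2 / N) = d * cnj d / of_real N"
      by (simp add: complex_norm_square del: of_real_power)
    show ?thesis
      unfolding e h1 h2 h3 by (simp add: cdot_self)
  qed
  finally have "of_real ((norm (b - t *s a))^2) = (of_real ((norm b)^2 - (cmod d)^2 / N) :: complex)"
    by simp
  then show ?thesis
    unfolding t_def d_def N_def by (simp only: of_real_eq_iff)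
qed

lemma cdot_cauchy_schwarz: "cmod (cdot b a) \<le> norm a * norm b"
proof (cases "a = 0")
  case True
  then show ?thesis by (simp add: cdot_def)
next
  case False
  have "(cmod (cdot b a))^2 / (norm a)^2 \<le> (norm b)^2"
    using norm_residual_sq[OF False, of b] by (metis diff_ge_0_iff_ge zero_le_power2)
  then have "(cmod (cdot b a))^2 \<le> (norm a * norm b)^2"
    using False by (simp add: field_simps power_mult_distrib)
  then show ?thesis
    by (rule power2_le_imp_le) simp
qed

lemma herm_le_norm: "cmod (herm y z) \<le> norm y * norm z"
proof -
  define z' :: "complex^3" where "z' = (\<chi> i. if i = 0 then z$i else - z$i)"
  have "herm y z = cdot y z'"
    unfolding herm_def cdot_def z'_def sum_UNIV_3 by simp
  moreover have "(norm z')^2 = (norm z)^2"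
    unfolding power2_norm_vec3 z'_def by simp
  then have "norm z' = norm z"
    by (simp add: power2_eq_iff_nonneg)
  ultimately show ?thesis
    using cdot_cauchy_schwarz[of y z'] by (simp add: mult.commute)
qed

lemma wedge_norm_commute: "wedge_norm a b = wedge_norm b a"
  unfolding wedge_norm_def using cdot_commute[of a b] by (simp add: mult.commute)

lemma dE_commute: "dE a b = dE b a"
  unfolding dE_def by (simp add: wedge_norm_commute mult.commute)

lemma wedge_norm_nonneg: "0 \<le> wedge_norm a b"
proof -
  have "(cmod (cdot a b))^2 \<le> (norm a * norm b)^2"
    using cdot_cauchy_schwarz[of a b] by (simp add: power_mono mult.commute)
  then show ?thesis
    unfolding wedge_norm_def by (simp add: power_mult_distrib)
qed

lemma dE_nonneg: "0 \<le> dE a b"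
  unfolding dE_def by (simp add: wedge_norm_nonneg)

lemma wedge_norm_le: "wedge_norm a b \<le> norm a * norm b"
proof -
  have "wedge_norm a b \<le> sqrt ((norm a)^2 * (norm b)^2)"
    unfolding wedge_norm_def by simp
  then show ?thesis
    by (simp add: real_sqrt_mult)
qed

lemma norm_residual:
  assumes "a \<noteq> 0"
  shows "norm (b - (cdot b a / of_real ((norm a)^2)) *s a) = wedge_norm b a / norm a"
proof -
  have "(norm (b - (cdot b a / of_real ((norm a)^2)) *s a))^2
      = ((norm b)^2 * (norm a)^2 - (cmod (cdot b a))^2) / (norm a)^2"
    unfolding norm_residual_sq[OF assms] using assms by (simp add: field_simps)
  then have "norm (b - (cdot b a / of_real ((norm a)^2)) *s a)
      = sqrt ((norm b)^2 * (norm a)^2 - (cmod (cdot b a))^2) / sqrt ((norm a)^2)"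
    by (metis norm_ge_zero real_sqrt_divide real_sqrt_unique)
  then show ?thesis
    unfolding wedge_norm_def by simp
qed

lemma wedge_norm_add_smult:
  assumes "a \<noteq> 0"
  shows "wedge_norm (b + k *s a) a = wedge_norm b a"
proof -
  let ?N = "of_real ((norm a)^2) :: complex"
  have "?N \<noteq> 0"
    using assms by simp
  then have "cdot (b + k *s a) a / ?N = cdot b a / ?N + k"
    unfolding cdot_add_left cdot_smult_left cdot_self by (simp add: field_simps)
  then have "b + k *s a - (cdot (b + k *s a) a / ?N) *s a = b - (cdot b a / ?N) *s a"
    by (simp add: vec_eq_iff algebra_simps)
  then have "wedge_norm (b + k *s a) a / norm a = wedge_norm b a / norm a"
    by (metis norm_residual[OF assms])
  then show ?thesis
    using assms by simp
qed

lemma wedge_norm_smult: "wedge_norm (c *s b) a = cmod c * wedge_norm b a"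
proof -
  have "(norm (c *s b))^2 * (norm a)^2 - (cmod (cdot (c *s b) a))^2
      = (cmod c)^2 * ((norm b)^2 * (norm a)^2 - (cmod (cdot b a))^2)"
    unfolding norm_smult_vec3 cdot_smult_left norm_mult by (simp add: algebra_simps power_mult_distrib)
  then show ?thesis
    unfolding wedge_norm_def by (simp add: real_sqrt_mult)
qed

lemma dE_smult_right:
  assumes "c \<noteq> 0"
  shows "dE a (c *s b) = dE a b"
  using assms unfolding dE_def
  by (simp add: wedge_norm_commute[of a] wedge_norm_smult norm_smult_vec3)

lemma dE_add_mult_norm_le:
  assumes "a \<noteq> 0"
  shows "dE a (a + c) * norm (a + c) \<le> norm c"
proof (cases "a + c = 0")
  case True
  then show ?thesis by simp
next
  case False
  have "dE a (a + c) * norm (a + c) = wedge_norm (c + 1 *s a) a / norm a"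
    using False unfolding dE_def by (simp add: wedge_norm_commute add.commute)
  also have "\<dots> = wedge_norm c a / norm a"
    by (simp only: wedge_norm_add_smult[OF assms])
  also have "\<dots> \<le> norm c"
    using wedge_norm_le[of c a] assms by (simp add: divide_le_eq)
  finally show ?thesis .
qed

lemma herm_div_norm_lipschitz:
  assumes "u \<noteq> 0" "u' \<noteq> 0"
  shows "cmod (herm y u') / norm u' \<le> cmod (herm y u) / norm u + norm y * dE u u'"
proof -
  define t where "t = cdot u' u / of_real ((norm u)^2)"
  define w where "w = u' - t *s u"
  have "herm y u' = cnj t * herm y u + herm y w"
    unfolding w_def herm_diff_right herm_smult_right by simp
  then have "cmod (herm y u') \<le> cmod t * cmod (herm y u) + cmod (herm y w)"
    by (metis norm_mult norm_triangle_ineq complex_mod_cnj)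
  moreover have "cmod t \<le> norm u' / norm u"
  proof -
    have "cmod t = cmod (cdot u' u) / (norm u)^2"
      unfolding t_def by (simp add: norm_divide norm_power)
    also have "\<dots> \<le> (norm u * norm u') / (norm u)^2"
      using cdot_cauchy_schwarz[of u' u] by (simp add: divide_right_mono)
    finally show ?thesis
      using assms(1) by (simp add: power2_eq_square)
  qed
  moreover have "norm w = norm u' * dE u u'"
    using norm_residual[OF assms(1), of u'] assms
    unfolding w_def t_def dE_def by (simp add: wedge_norm_commute)
  then have "cmod (herm y w) \<le> norm y * (norm u' * dE u u')"
    using herm_le_norm[of y w] by simp
  ultimately have "cmod (herm y u') \<le> norm u' / norm u * cmod (herm y u) + norm y * (norm u' * dE u u')"
    by (meson add_mono mult_right_mono norm_ge_zero order_trans)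
  also have "\<dots> = norm u' * (cmod (herm y u) / norm u + norm y * dE u u')"
    by (simp add: algebra_simps)
  finally have "cmod (herm y u') \<le> norm u' * (cmod (herm y u) / norm u + norm y * dE u u')" .
  then show ?thesis
    using assms(2) by (simp add: divide_le_eq mult.commute)
qed

(* The cross product of conj (J x) and conj (J y) with J = diag(1,-1,-1): it spans the
   herm-orthogonal complement of x and y whenever it is nonzero. *)
definition herm_cross :: "complex^3 \<Rightarrow> complex^3 \<Rightarrow> complex^3" where
  "herm_cross x y = (\<chi> i.
     if i = 0 then cnj (x$1) * cnj (y$2) - cnj (x$2) * cnj (y$1)
     else if i = 1 then cnj (x$0) * cnj (y$2) - cnj (x$2) * cnj (y$0)
     else cnj (x$1) * cnj (y$0) - cnj (x$0) * cnj (y$1))"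

lemma herm_cross_nth:
  "herm_cross x y $ 0 = cnj (x$1) * cnj (y$2) - cnj (x$2) * cnj (y$1)"
  "herm_cross x y $ 1 = cnj (x$0) * cnj (y$2) - cnj (x$2) * cnj (y$0)"
  "herm_cross x y $ 2 = cnj (x$1) * cnj (y$0) - cnj (x$0) * cnj (y$1)"
  unfolding herm_cross_def by simp_all

lemma herm_herm_cross: "herm (herm_cross x y) x = 0" "herm (herm_cross x y) y = 0"
  unfolding herm_def herm_cross_nth by (simp_all add: algebra_simps)

lemma qf_herm_cross: "qf (herm_cross x y) = qf x * qf y - (cmod (herm x y))^2"
proof -
  have "herm (herm_cross x y) (herm_cross x y) = herm x x * herm y y - herm x y * cnj (herm x y)"
    unfolding herm_def herm_cross_nth by (simp add: algebra_simps)
  then have "of_real (qf (herm_cross x y)) = (of_real (qf x * qf y - (cmod (herm x y))^2) :: complex)"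
    by (simp add: herm_self complex_norm_square del: of_real_power)
  then show ?thesis
    by (simp only: of_real_eq_iff)
qed

lemma norm_herm_cross_le: "norm (herm_cross x y) \<le> norm x * norm y"
proof -
  have "cdot (herm_cross x y) (herm_cross x y) + cdot x y * cnj (cdot x y) = cdot x x * cdot y y"
    unfolding cdot_def sum_UNIV_3 herm_cross_nth by (simp add: algebra_simps)
  then have "of_real ((norm (herm_cross x y))^2 + (cmod (cdot x y))^2)
      = (of_real ((norm x * norm y)^2) :: complex)"
    by (simp add: cdot_self complex_norm_square power_mult_distrib del: of_real_power)
  then have "(norm (herm_cross x y))^2 \<le> (norm x * norm y)^2"
    by (metis le_add_same_cancel1 of_real_eq_iff zero_le_power2)
  then show ?thesis
    by (rule power2_le_imp_le) simp
qed

lemma herm_orth_imp_parallel_herm_cross: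
  assumes "herm p x = 0" "herm p y = 0" "herm_cross x y \<noteq> 0"
  shows "\<exists>c. p = c *s herm_cross x y"
proof -
  let ?P = "herm_cross x y"
  have "p$0 * ?P$1 - p$1 * ?P$0 = cnj (y$2) * herm p x - cnj (x$2) * herm p y"
    "p$0 * ?P$2 - p$2 * ?P$0 = cnj (x$1) * herm p y - cnj (y$1) * herm p x"
    "p$1 * ?P$2 - p$2 * ?P$1 = cnj (x$0) * herm p y - cnj (y$0) * herm p x"
    unfolding herm_def herm_cross_nth by (simp_all add: algebra_simps)
  then have minors: "p$0 * ?P$1 = p$1 * ?P$0" "p$0 * ?P$2 = p$2 * ?P$0" "p$1 * ?P$2 = p$2 * ?P$1"
    using assms(1,2) by simp_all
  consider "?P$0 \<noteq> 0" | "?P$1 \<noteq> 0" | "?P$2 \<noteq> 0"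
    using assms(3) vec3_eq_iff[of ?P 0] by auto
  then show ?thesis
  proof cases
    case 1
    then show ?thesis
      using minors by (intro exI[of _ "p$0 / ?P$0"]) (simp add: vec3_eq_iff field_simps)
  next
    case 2
    then show ?thesis
      using minors by (intro exI[of _ "p$1 / ?P$1"]) (simp add: vec3_eq_iff field_simps)
  next
    case 3
    then show ?thesis
      using minors by (intro exI[of _ "p$2 / ?P$2"]) (simp add: vec3_eq_iff field_simps)
  qed
qed

lemma herm_cross_nonzero:
  assumes "x \<in> S3" "y \<in> S3" "herm x y \<noteq> 0"
  shows "herm_cross x y \<noteq> 0"
proof
  assume "herm_cross x y = 0"
  then have "qf (herm_cross x y) = 0"
    by (simp add: qf_def herm_def)
  then show False
    using assms qf_herm_cross[of x y] unfolding S3_def by simp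
qed

lemma qf_eq_0_nth_0_imp_zero:
  assumes "qf z = 0" "z$0 = 0"
  shows "z = 0"
proof -
  have "qf z = - ((cmod (z$1))^2 + (cmod (z$2))^2)"
    using assms(2) unfolding qf_eq_coords by simp
  then have "(cmod (z$1))^2 + (cmod (z$2))^2 = 0"
    using assms(1) by linarith
  then have "z$1 = 0 \<and> z$2 = 0"
    by (simp only: sum_power2_eq_zero_iff norm_eq_zero)
  then show ?thesis
    using assms(2) by (simp add: vec3_eq_iff)
qed

lemma S3_nth_0_nonzero: "x \<in> S3 \<Longrightarrow> x$0 \<noteq> 0"
  using qf_eq_0_nth_0_imp_zero unfolding S3_def by blast

lemma S3_herm_eq_0_imp_parallel:
  assumes "x \<in> S3" "y \<in> S3" "herm x y = 0"
  shows "\<exists>c. y = c *s x"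
proof -
  define z where "z = y - (y$0 / x$0) *s x"
  have "z$0 = 0"
    using S3_nth_0_nonzero[OF assms(1)] unfolding z_def by simp
  have "herm x x = 0" "herm y y = 0"
    using assms(1,2) unfolding S3_def by (simp_all add: herm_self)
  then have "herm z z = 0"
    using assms(3) herm_commute[of x y]
    unfolding z_def herm_diff_left herm_diff_right herm_smult_left herm_smult_right by simp
  then have "z = 0"
    using qf_eq_0_nth_0_imp_zero \<open>z$0 = 0\<close> by (simp add: herm_self)
  then show ?thesis
    unfolding z_def by auto
qed

lemma compact_pos_lower_bound:
  fixes f :: "'a::topological_space \<Rightarrow> real"
  assumes "compact K" "continuous_on K f" "\<And>z. z \<in> K \<Longrightarrow> 0 < f z"
  shows "\<exists>\<delta>>0. \<forall>z\<in>K. \<delta> \<le> f z"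
proof (cases "K = {}")
  case True
  then show ?thesis
    using zero_less_one by blast
next
  case False
  obtain z0 where "z0 \<in> K" "\<forall>z\<in>K. f z0 \<le> f z"
    using continuous_attains_inf[OF assms(1) False assms(2)] by blast
  then show ?thesis
    using assms(3) by blast
qed

lemma proj_set_normalize:
  assumes "proj_set A" "x \<in> A"
  shows "of_real (1 / norm x) *s x \<in> A" "norm (of_real (1 / norm x) *s x) = 1"
  using assms unfolding proj_set_def by (auto simp: norm_smult_vec3 norm_divide)

lemma uniform_herm_lower_bound:
  assumes "proj_set B" "proj_set V" "B \<subseteq> S3" "V \<subseteq> S3" "B \<inter> V = {}"
    and "proj_compact B" "proj_compact V"
  shows "\<exists>\<delta>>0. \<forall>x\<in>B. \<forall>y\<in>V. \<delta> * norm x * norm y \<le> cmod (herm x y)"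
proof -
  define K where "K = {a\<in>B. norm a = 1} \<times> {a\<in>V. norm a = 1}"
  have "compact K"
    using assms(6,7) unfolding K_def proj_compact_def by (rule compact_Times)
  moreover have "continuous_on K (\<lambda>z. cmod (herm (fst z) (snd z)))"
    unfolding herm_def by (intro continuous_intros)
  moreover have "0 < cmod (herm (fst z) (snd z))" if "z \<in> K" for z
  proof (rule ccontr)
    assume "\<not> 0 < cmod (herm (fst z) (snd z))"
    moreover have "fst z \<in> S3" "snd z \<in> S3"
      using that assms(3,4) unfolding K_def by auto
    ultimately obtain c where c: "snd z = c *s fst z"
      using S3_herm_eq_0_imp_parallel by fastforce
    then have "c \<noteq> 0"
      using that unfolding K_def by auto
    then have "snd z \<in> B"
      using c that assms(1) unfolding K_def proj_set_def by auto
    then show False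
      using that assms(5) unfolding K_def by auto
  qed
  ultimately obtain \<delta> where "\<delta> > 0" and \<delta>: "\<forall>z\<in>K. \<delta> \<le> cmod (herm (fst z) (snd z))"
    using compact_pos_lower_bound[of K "\<lambda>z. cmod (herm (fst z) (snd z))"] by blast
  have "\<delta> * norm x * norm y \<le> cmod (herm x y)" if "x \<in> B" "y \<in> V" for x y
  proof -
    have "x \<noteq> 0" "y \<noteq> 0"
      using that assms(1,2) unfolding proj_set_def by auto
    have "(of_real (1 / norm x) *s x, of_real (1 / norm y) *s y) \<in> K"
      unfolding K_def using proj_set_normalize assms(1,2) that by simp
    then have "\<delta> \<le> cmod (herm (of_real (1 / norm x) *s x) (of_real (1 / norm y) *s y))"
      using \<delta> by fastforce
    also have "\<dots> = cmod (herm x y) / (norm x * norm y)"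
      by (simp add: herm_smult_left herm_smult_right norm_mult norm_divide)
    finally have "\<delta> \<le> cmod (herm x y) / (norm x * norm y)" .
    then show ?thesis
      using \<open>x \<noteq> 0\<close> \<open>y \<noteq> 0\<close> by (simp add: field_simps)
  qed
  then show ?thesis
    using \<open>\<delta> > 0\<close> by blast
qed

lemma herm_nonzero_if_lower_bound:
  assumes "\<delta> > 0" "x \<noteq> 0" "y \<noteq> 0" "\<delta> * norm x * norm y \<le> cmod (herm x y)"
  shows "herm x y \<noteq> 0"
proof -
  have "0 < \<delta> * norm x * norm y"
    using assms(1-3) by simp
  then show ?thesis
    using assms(4) by auto
qed

lemma proj_pi_herm_orth:
  assumes "x \<in> S3" "y \<in> S3" "herm x y \<noteq> 0"
  shows "proj_pi x y \<noteq> 0" "herm (proj_pi x y) x = 0" "herm (proj_pi x y) y = 0"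
proof -
  have "\<exists>p. p \<noteq> 0 \<and> herm p x = 0 \<and> herm p y = 0"
    using herm_cross_nonzero[OF assms] herm_herm_cross by blast
  then have "proj_pi x y \<noteq> 0 \<and> herm (proj_pi x y) x = 0 \<and> herm (proj_pi x y) y = 0"
    unfolding proj_pi_def by (rule someI_ex)
  then show "proj_pi x y \<noteq> 0" "herm (proj_pi x y) x = 0" "herm (proj_pi x y) y = 0"
    by simp_all
qed

lemma herm_div_norm_le_of_herm_orth:
  assumes "herm p y = 0" "p \<noteq> 0" "u \<noteq> 0" "u' \<noteq> 0"
  shows "cmod (herm y u') / norm u' \<le> norm y * (dE u p + dE u u')"
proof -
  have "herm y p = 0"
    using assms(1) herm_commute[of p y] by simp
  then have "cmod (herm y u) / norm u \<le> norm y * dE u p"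
    using herm_div_norm_lipschitz[OF assms(2,3), of y] by (simp add: dE_commute)
  then show ?thesis
    using herm_div_norm_lipschitz[OF assms(3,4), of y] by (simp add: distrib_left)
qed

lemma dE_herm_orth_le:
  assumes x: "x \<in> S3" and y: "y \<in> S3" and u: "qf u < 0" "herm x u = 0"
    and xy: "herm x y \<noteq> 0"
    and p: "p \<noteq> 0" "herm p x = 0" "herm p y = 0"
  shows "dE u p * sqrt (- qf u) * cmod (herm x y) \<le> cmod (herm y u) * norm x"
proof -
  \<comment> \<open>w is the point of the line through u and x orthogonal to y: it represents the same
    projective point as p and, x being null and orthogonal to u, has q(w) = q(u).\<close>
  define s where "s = herm u y / herm x y"
  define w where "w = u - s *s x"
  have "herm x x = 0"
    using x unfolding S3_def by (simp add: herm_self)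
  moreover have "herm u x = 0"
    using u(2) herm_commute[of x u] by simp
  ultimately have "herm w x = 0" "herm w y = 0" "herm w w = herm u u"
    using xy u(2) unfolding w_def s_def herm_diff_left herm_diff_right herm_smult_left herm_smult_right
    by simp_all
  then have "qf w = qf u"
    by (simp add: herm_self)
  have "u \<noteq> 0" "w \<noteq> 0"
    using u(1) \<open>qf w = qf u\<close> by (auto simp: qf_def herm_def)
  have "dE u p = dE u w"
  proof -
    have P: "herm_cross x y \<noteq> 0"
      using herm_cross_nonzero[OF x y xy] .
    obtain c1 c2 where "p = c1 *s herm_cross x y" "w = c2 *s herm_cross x y"
      using herm_orth_imp_parallel_herm_cross[OF _ _ P] p \<open>herm w x = 0\<close> \<open>herm w y = 0\<close> by metis
    then have "p = (c1 / c2) *s w" "c1 / c2 \<noteq> 0"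
      using p(1) \<open>w \<noteq> 0\<close> by (auto simp: vec_eq_iff)
    then show ?thesis
      by (simp add: dE_smult_right)
  qed
  have "sqrt (- qf u) \<le> norm w"
    using neg_qf_le_norm[of w] \<open>qf w = qf u\<close> by (simp add: real_le_lsqrt)
  then have "dE u p * sqrt (- qf u) \<le> dE u w * norm w"
    unfolding \<open>dE u p = dE u w\<close> by (simp add: dE_nonneg mult_left_mono)
  also have "\<dots> \<le> cmod s * norm x"
    using dE_add_mult_norm_le[OF \<open>u \<noteq> 0\<close>, of "- (s *s x)"]
    by (simp add: w_def norm_smult_vec3)
  finally have "dE u p * sqrt (- qf u) * cmod (herm x y) \<le> cmod s * norm x * cmod (herm x y)"
    by (rule mult_right_mono) simp
  also have "\<dots> = cmod (herm y u) * norm x"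
    using xy herm_commute[of u y] by (simp add: s_def norm_divide)
  finally show ?thesis .
qed

lemma herm_null_pair_mult_norm_le:
  assumes "x \<in> S3" "v \<in> S3" "herm x u = 0" "herm v u = 0" "herm x v \<noteq> 0"
  shows "cmod (herm x v) * norm u \<le> norm x * norm v * sqrt (- qf u)"
proof -
  have "herm u x = 0" "herm u v = 0"
    using assms(3,4) herm_commute[of x u] herm_commute[of v u] by simp_all
  then obtain c where c: "u = c *s herm_cross x v"
    using herm_orth_imp_parallel_herm_cross herm_cross_nonzero[OF assms(1,2,5)] by blast
  have "- qf u = (cmod c * cmod (herm x v))^2"
    using assms(1,2) unfolding c qf_smult qf_herm_cross S3_def by (simp add: power_mult_distrib)
  then have "sqrt (- qf u) = cmod c * cmod (herm x v)"
    by simp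
  moreover have "norm u \<le> cmod c * (norm x * norm v)"
    unfolding c norm_smult_vec3 using norm_herm_cross_le by (simp add: mult_left_mono)
  then have "cmod (herm x v) * norm u \<le> cmod (herm x v) * (cmod c * (norm x * norm v))"
    by (simp add: mult_left_mono)
  ultimately show ?thesis
    by (simp add: mult_ac)
qed

lemma dE_proj_pi_le:
  assumes "\<delta> > 0"
    and S3: "x \<in> S3" "x' \<in> S3" "y \<in> S3" "v \<in> S3"
    and u: "u \<noteq> 0" and u': "qf u' < 0" "herm x' u' = 0" "herm v u' = 0"
    and xy: "herm x y \<noteq> 0"
    and x'y: "\<delta> * norm x' * norm y \<le> cmod (herm x' y)"
    and x'v: "\<delta> * norm x' * norm v \<le> cmod (herm x' v)"
  shows "dE u' (proj_pi x' y) \<le> (dE u (proj_pi x y) + dE u u') / \<delta>^2"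
proof -
  define D where "D = dE u (proj_pi x y) + dE u u'"
  define p' where "p' = proj_pi x' y"
  have "x' \<noteq> 0" "y \<noteq> 0" "v \<noteq> 0" "u' \<noteq> 0"
    using S3 u'(1) unfolding S3_def by (auto simp: qf_def herm_def)
  then have "herm x' y \<noteq> 0" "herm x' v \<noteq> 0"
    using herm_nonzero_if_lower_bound[OF \<open>\<delta> > 0\<close>] x'y x'v by simp_all
  have "cmod (herm y u') / norm u' \<le> norm y * D"
    unfolding D_def using proj_pi_herm_orth[OF S3(1,3) xy] u \<open>u' \<noteq> 0\<close>
    by (intro herm_div_norm_le_of_herm_orth)
  then have yu': "cmod (herm y u') \<le> norm u' * norm y * D"
    using \<open>u' \<noteq> 0\<close> by (simp add: divide_le_eq mult_ac)
  have "\<delta> * norm u' * (norm x' * norm v) \<le> cmod (herm x' v) * norm u'"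
    using mult_right_mono[OF x'v norm_ge_zero[of u']] by (simp add: mult_ac)
  also have "\<dots> \<le> sqrt (- qf u') * (norm x' * norm v)"
    using herm_null_pair_mult_norm_le[OF S3(2,4) u'(2,3) \<open>herm x' v \<noteq> 0\<close>] by (simp add: mult_ac)
  finally have sqrt_neg_qf: "\<delta> * norm u' \<le> sqrt (- qf u')"
    using \<open>x' \<noteq> 0\<close> \<open>v \<noteq> 0\<close> by simp
  have "dE u' p' * (\<delta> * norm u') * (\<delta> * norm x' * norm y) \<le> dE u' p' * sqrt (- qf u') * cmod (herm x' y)"
    using sqrt_neg_qf x'y \<open>\<delta> > 0\<close> u'(1) dE_nonneg[of u' p']
    by (intro mult_mono mult_left_mono) auto
  also have "\<dots> \<le> cmod (herm y u') * norm x'"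
    unfolding p'_def using proj_pi_herm_orth[OF S3(2,3) \<open>herm x' y \<noteq> 0\<close>]
    by (intro dE_herm_orth_le[OF S3(2,3) u'(1,2) \<open>herm x' y \<noteq> 0\<close>])
  also have "\<dots> \<le> norm u' * norm y * D * norm x'"
    using yu' by (simp add: mult_right_mono)
  finally have "dE u' p' * \<delta>^2 * (norm u' * norm x' * norm y) \<le> D * (norm u' * norm x' * norm y)"
    by (simp add: power2_eq_square mult_ac)
  then have "dE u' p' * \<delta>^2 \<le> D"
    using \<open>x' \<noteq> 0\<close> \<open>y \<noteq> 0\<close> \<open>u' \<noteq> 0\<close> by simp
  then show ?thesis
    using \<open>\<delta> > 0\<close> by (simp add: D_def p'_def pos_le_divide_eq)
qed

theorem lemma5p12:
  fixes B V :: "(complex^3) set"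
  assumes "proj_set B" and "proj_set V"
    and "B \<noteq> {}" and "V \<noteq> {}"
    and "B \<subseteq> S3" and "V \<subseteq> S3"
    and "B \<inter> V = {}"
    and "proj_compact B" and "proj_compact V"
  shows "\<exists>C>0. \<forall>x\<in>B. \<forall>x'\<in>B. \<forall>u\<in>LC. \<forall>u'\<in>LC. \<forall>r>0.
           x \<in> chain u \<and> x' \<in> chain u' \<and> chain u \<inter> V \<noteq> {} \<and> chain u' \<inter> V \<noteq> {} \<longrightarrow>
           pi_inv x (dball u r) \<inter> V \<subseteq> pi_inv x' (dball u' (C * (r + dE u u')))"
proof -
  obtain \<delta> where "\<delta> > 0" and \<delta>: "\<forall>x\<in>B. \<forall>y\<in>V. \<delta> * norm x * norm y \<le> cmod (herm x y)"
    using uniform_herm_lower_bound[OF assms(1,2,5-9)] by blast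
  have herm_nonzero: "herm x y \<noteq> 0" if "x \<in> B" "y \<in> V" for x y
    using herm_nonzero_if_lower_bound[OF \<open>\<delta> > 0\<close>] \<delta> that assms(5,6) unfolding S3_def by blast
  have "pi_inv x (dball u r) \<inter> V \<subseteq> pi_inv x' (dball u' (1 / \<delta>^2 * (r + dE u u')))"
    if "x \<in> B" "x' \<in> B" "u \<in> LC" "u' \<in> LC" "x' \<in> chain u'" "v \<in> chain u' \<inter> V" for x x' u u' r v
  proof
    fix y
    assume y: "y \<in> pi_inv x (dball u r) \<inter> V"
    have "\<not> proj_eq x' y"
      using y \<open>x' \<in> B\<close> assms(1,7) unfolding proj_eq_def proj_set_def by blast
    have "dE u' (proj_pi x' y) \<le> (dE u (proj_pi x y) + dE u u') / \<delta>^2"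
      using that y assms(5,6) \<delta> \<open>\<delta> > 0\<close> herm_nonzero LC_nonzero
      by (intro dE_proj_pi_le[of \<delta> x x' y v]) (auto simp: chain_def pi_inv_def LC_def)
    also have "\<dots> \<le> 1 / \<delta>^2 * (r + dE u u')"
      using y by (simp add: pi_inv_def dball_def divide_right_mono)
    finally show "y \<in> pi_inv x' (dball u' (1 / \<delta>^2 * (r + dE u u')))"
      using y \<open>\<not> proj_eq x' y\<close> proj_pi_herm_orth(1)[of x' y] herm_nonzero \<open>x' \<in> B\<close> assms(5)
      by (auto simp: pi_inv_def dball_def)
  qed
  moreover have "1 / \<delta>^2 > 0"
    using \<open>\<delta> > 0\<close> by simp
  ultimately show ?thesis
    by blast
qed

end
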